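(* Let $I=(G,t,t^* )$ be a boosted instance and $B=(q,\tau)$ a boost action with $\tau\ge t^*_q$. Let $\tau_0\ge0$ and let $S$ be an active component at time $\tau_0$ in shadow moat growing on the boosted fingerprint of $\mathrm{WithBoost}(I,B)$. If $q\notin S$ or $\tau\le\tau_0$, then there is an active component $S'$ at time $\tau_0$ in shadow moat growing on $(G,t^* )$ (the run for $I$) with $S'\subseteq S$.
   Context: $G=(V,E,c)$ is an undirected graph with edge costs $c\ge0$; $\delta(S)$ denotes the edges with exactly one endpoint in $S$. Shadow moat growing on $(G,s)$, for $s:V\to\mathbb{R}_{\ge0}$: continuous process in time maintaining a forest (initially empty), its components, and $y_S\ge0$ (initially $0$); at time $\tau$ a component $C$ is active iff some $w\in C$ has $s_w>\tau$, and each active $C$ increases $y_C$ at rate $1$; an edge $e$ between different components with $\sum_{S:e\in\delta(S)}y_S=c_e$ is added and the components merge (ties processed by a fixed rule); stop when nothing is active. A boosted instance is $I=(G,t,t^* )$ with $t,t^*:V\to\mathbb{R}_{\ge0}$ and $t^*\ge t$ pointwise; the run for $I$ is shadow moat growing on $(G,t^* )$. A boost action $B=(q,\tau)$, $\tau\ge t^*_q$, yields $\mathrm{WithBoost}(I,B)=(G,t,t^{*\prime})$ with $t^{*\prime}_q=\tau$ and $t^{*\prime}_v=t^*_v$ for $v\ne q$. *)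

theory Defs
  imports Main "HOL-Library.Extended_Real"
begin

text \<open>Shadow moat growing is simulated as a discrete event process.  The tie rule is fixed by a
  list eo enumerating the edges: among the tight edges the first one in eo is added.\<close>

definition wf_graph :: "'v set \<Rightarrow> 'v set set \<Rightarrow> ('v set \<Rightarrow> real) \<Rightarrow> bool" where
  "wf_graph V E c \<longleftrightarrow> finite V \<and> (\<forall>e\<in>E. e \<subseteq> V \<and> card e = 2) \<and> (\<forall>e\<in>E. 0 \<le> c e)"

record 'v mstate =
  mtime :: real
  comps :: "'v set set"
  fam   :: "'v set set"
  yv    :: "'v set \<Rightarrow> real"

definition in_cut :: "'v set \<Rightarrow> 'v set \<Rightarrow> bool" where
  "in_cut e S \<longleftrightarrow> card (e \<inter> S) = 1"

text \<open>sum of y_S over all S with e \<in> \<delta>(S); y is zero outside the family L of sets that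
  have ever been components\<close>
definition load :: "'v set set \<Rightarrow> ('v set \<Rightarrow> real) \<Rightarrow> 'v set \<Rightarrow> real" where
  "load L y e = (\<Sum>S\<in>L. if in_cut e S then y S else 0)"

definition is_active :: "('v \<Rightarrow> real) \<Rightarrow> real \<Rightarrow> 'v set \<Rightarrow> bool" where
  "is_active s \<tau> C \<longleftrightarrow> (\<exists>w\<in>C. \<tau> < s w)"

definition crosses :: "'v set set \<Rightarrow> 'v set \<Rightarrow> bool" where
  "crosses P e \<longleftrightarrow> (\<exists>C\<in>P. in_cut e C)"

definition mg_init :: "'v set \<Rightarrow> 'v mstate" where
  "mg_init V = \<lparr>mtime = 0, comps = (\<lambda>v. {v}) ` V, fam = (\<lambda>v. {v}) ` V, yv = (\<lambda>_. 0)\<rparr>"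

text \<open>One event: add the first tight edge (merging components); otherwise, if some component
  is active, grow all active components until the next event (tight edge or deactivation);
  otherwise stop (the state is a fixpoint).\<close>
definition mg_step :: "'v set \<Rightarrow> 'v set list \<Rightarrow> ('v set \<Rightarrow> real) \<Rightarrow> ('v \<Rightarrow> real)
    \<Rightarrow> 'v mstate \<Rightarrow> 'v mstate" where
  "mg_step V eo c s st =
    (let \<tau> = mtime st; P = comps st; L = fam st; y = yv st in
     case find (\<lambda>e. crosses P e \<and> load L y e = c e) eo of
       Some e \<Rightarrow>
         (let M = {C\<in>P. e \<inter> C \<noteq> {}}; N = \<Union>M in
          st\<lparr>comps := insert N (P - M), fam := insert N L\<rparr>)
     | None \<Rightarrow>
         (if \<not> (\<exists>C\<in>P. is_active s \<tau> C) then st else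
          (let A = {C\<in>P. is_active s \<tau> C};
               rate = (\<lambda>e. card {C\<in>A. e \<inter> C \<noteq> {}});
               \<Delta> = Min ({s w - \<tau> | w. w \<in> V \<and> \<tau> < s w} \<union>
                        {(c e - load L y e) / real (rate e) | e. e \<in> set eo \<and> crosses P e \<and> 0 < rate e})
           in st\<lparr>mtime := \<tau> + \<Delta>, yv := (\<lambda>S. if S \<in> A then y S + \<Delta> else y S)\<rparr>)))"

definition mg_run :: "'v set \<Rightarrow> 'v set list \<Rightarrow> ('v set \<Rightarrow> real) \<Rightarrow> ('v \<Rightarrow> real) \<Rightarrow> nat \<Rightarrow> 'v mstate" where
  "mg_run V eo c s k = (mg_step V eo c s ^^ k) (mg_init V)"

text \<open>S is an active component at time \<tau>0 of shadow moat growing on (G,s): S is a component of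
  the state reached after processing all events at times \<le> \<tau>0, and S is active at \<tau>0.\<close>
definition active_comp_at :: "'v set \<Rightarrow> 'v set list \<Rightarrow> ('v set \<Rightarrow> real) \<Rightarrow> ('v \<Rightarrow> real)
    \<Rightarrow> real \<Rightarrow> 'v set \<Rightarrow> bool" where
  "active_comp_at V eo c s \<tau>0 S \<longleftrightarrow>
    (\<exists>k. mtime (mg_run V eo c s k) \<le> \<tau>0 \<and>
         (\<tau>0 < mtime (mg_run V eo c s (Suc k)) \<or> mg_run V eo c s (Suc k) = mg_run V eo c s k) \<and>
         S \<in> comps (mg_run V eo c s k) \<and> is_active s \<tau>0 S)"

definition boosted_instance :: "'v set \<Rightarrow> ('v \<Rightarrow> real) \<Rightarrow> ('v \<Rightarrow> real) \<Rightarrow> bool" where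
  "boosted_instance V t ts \<longleftrightarrow> (\<forall>v\<in>V. 0 \<le> t v \<and> t v \<le> ts v)"

definition with_boost :: "('v \<Rightarrow> real) \<Rightarrow> 'v \<Rightarrow> real \<Rightarrow> ('v \<Rightarrow> real)" where
  "with_boost ts q \<tau> = ts(q := \<tau>)"

end

theory Submission
  imports Defs "HOL-Library.Disjoint_Sets"
begin

text \<open>Raising deadlines can only keep moats growing longer. Compare the run for s with the run
  for some s' \<ge> s event by event: every component of the s-run lies inside a component of the
  s'-run at the same time, and the load accumulated at each vertex (the sum of y over the sets
  containing it) in the s-run is at most the load at the same time in the s'-run. Merges preserve
  this because an edge that becomes tight in the s-run would otherwise still cross the s'-partition
  with positive slack; growth phases preserve it because a vertex whose load grows in the s-run
  shares a component with a vertex whose s-deadline, hence also its s'-deadline, has not passed.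
  For the theorem, s' is the boosted fingerprint: an active component S of the boosted run at
  \<tau>0 contains a vertex w with \<tau>0 < s' w, and w \<noteq> q because q \<notin> S or
  s' q = \<tau> \<le> \<tau>0. So the component of w in the original run at \<tau>0 is active and lies
  inside S.\<close>

section \<open>Partitions and cuts\<close>

abbreviation blocks_meeting :: "'a set set \<Rightarrow> 'a set \<Rightarrow> 'a set set" where
  "blocks_meeting P e \<equiv> {C\<in>P. e \<inter> C \<noteq> {}}"

lemma partition_on_block_exists: "partition_on A P \<Longrightarrow> u \<in> A \<Longrightarrow> \<exists>C\<in>P. u \<in> C"
  unfolding partition_on_def by blast

lemma partition_on_block_unique:
  "partition_on A P \<Longrightarrow> C \<in> P \<Longrightarrow> D \<in> P \<Longrightarrow> u \<in> C \<Longrightarrow> u \<in> D \<Longrightarrow> C = D"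
  unfolding partition_on_def disjoint_def by blast

lemma partition_on_block_subset: "partition_on A P \<Longrightarrow> C \<in> P \<Longrightarrow> C \<subseteq> A"
  unfolding partition_on_def by blast

lemma partition_on_merge:
  assumes "partition_on A P" "C \<in> P" "D \<in> P"
  shows "partition_on A (insert (C \<union> D) (P - {C, D}))"
proof (rule partition_onI)
  show "\<Union>(insert (C \<union> D) (P - {C, D})) = A"
    using assms partition_onD1[OF assms(1)] by blast
  show "{} \<notin> insert (C \<union> D) (P - {C, D})"
    using assms partition_onD3[OF assms(1)] by auto
  show "disjnt p q" if "p \<in> insert (C \<union> D) (P - {C, D})" "q \<in> insert (C \<union> D) (P - {C, D})" "p \<noteq> q" for p q
    using that partition_onD2[OF assms(1)] assms(2,3) unfolding disjoint_def disjnt_def by blast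
qed

lemma card_merge_less:
  assumes "finite P" "C \<in> P" "D \<in> P" "C \<noteq> D"
  shows "card (insert N (P - {C, D})) < card P"
proof -
  have "card (insert N (P - {C, D})) \<le> Suc (card (P - {C, D}))"
    using assms(1) by (simp add: card_insert_if)
  moreover have "card (P - {C, D}) = card P - 2"
    using assms by (simp add: card_Diff_subset)
  moreover have "2 \<le> card P"
    using assms card_mono[of P "{C, D}"] by simp
  ultimately show ?thesis by linarith
qed

lemma in_cut_pair: "u \<noteq> v \<Longrightarrow> in_cut {u, v} S \<longleftrightarrow> (u \<in> S \<longleftrightarrow> v \<notin> S)"
  unfolding in_cut_def by (cases "u \<in> S"; cases "v \<in> S") (auto simp: Int_insert_left)

lemma crosses_pair_iff:
  assumes "partition_on A P" "u \<in> A" "u \<noteq> v"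
  shows "crosses P {u, v} \<longleftrightarrow> \<not> (\<exists>C\<in>P. u \<in> C \<and> v \<in> C)"
proof
  assume "crosses P {u, v}"
  then obtain C where "C \<in> P" "u \<in> C \<longleftrightarrow> v \<notin> C"
    using assms(3) unfolding crosses_def by (auto simp: in_cut_pair)
  then show "\<not> (\<exists>C\<in>P. u \<in> C \<and> v \<in> C)"
    using partition_on_block_unique[OF assms(1)] by metis
next
  assume "\<not> (\<exists>C\<in>P. u \<in> C \<and> v \<in> C)"
  moreover obtain C where "C \<in> P" "u \<in> C"
    using partition_on_block_exists[OF assms(1,2)] by blast
  ultimately show "crosses P {u, v}"
    using assms(3) unfolding crosses_def by (auto simp: in_cut_pair)
qed

lemma crosses_merge_imp:
  assumes "partition_on A P" "C \<in> P" "D \<in> P" "u \<in> A" "u \<noteq> v"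
    and "crosses (insert (C \<union> D) (P - {C, D})) {u, v}"
  shows "crosses P {u, v}"
proof -
  have "\<not> (\<exists>B\<in>P. u \<in> B \<and> v \<in> B)"
  proof
    assume "\<exists>B\<in>P. u \<in> B \<and> v \<in> B"
    then obtain B where "B \<in> P" "u \<in> B" "v \<in> B" by blast
    then have "\<exists>B'\<in>insert (C \<union> D) (P - {C, D}). u \<in> B' \<and> v \<in> B'"
      by (cases "B \<in> {C, D}") auto
    then show False
      using assms(6) unfolding crosses_pair_iff[OF partition_on_merge[OF assms(1-3)] assms(4,5)] by blast
  qed
  then show ?thesis unfolding crosses_pair_iff[OF assms(1,4,5)] .
qed

lemma sum_indicator_const:
  "finite L \<Longrightarrow> X \<subseteq> L \<Longrightarrow> (\<Sum>S\<in>L. if S \<in> X then (d::real) else 0) = d * real (card X)"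
  by (simp add: sum.If_cases Int_absorb1)

section \<open>Invariants of a run\<close>

locale moat_growing =
  fixes V :: "'v set" and eo :: "'v set list" and c :: "'v set \<Rightarrow> real" and s :: "'v \<Rightarrow> real"
  assumes finite_V: "finite V"
    and edge_pair_card: "\<And>e. e \<in> set eo \<Longrightarrow> e \<subseteq> V \<and> card e = 2"
    and cost_nonneg: "\<And>e. e \<in> set eo \<Longrightarrow> 0 \<le> c e"
begin

abbreviation "step \<equiv> mg_step V eo c s"
abbreviation "run k \<equiv> mg_run V eo c s k"

abbreviation tight_edge :: "'v mstate \<Rightarrow> 'v set option" where
  "tight_edge st \<equiv> find (\<lambda>e. crosses (comps st) e \<and> load (fam st) (yv st) e = c e) eo"

abbreviation some_active :: "'v mstate \<Rightarrow> bool" where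
  "some_active st \<equiv> \<exists>C\<in>comps st. is_active s (mtime st) C"

definition active_comps :: "'v mstate \<Rightarrow> 'v set set" where
  "active_comps st = {C\<in>comps st. is_active s (mtime st) C}"

definition grow_time :: "'v mstate \<Rightarrow> real" where
  "grow_time st = Min ({s w - mtime st | w. w \<in> V \<and> mtime st < s w} \<union>
     {(c e - load (fam st) (yv st) e) / real (card (blocks_meeting (active_comps st) e)) | e.
        e \<in> set eo \<and> crosses (comps st) e \<and> 0 < card (blocks_meeting (active_comps st) e)})"

lemma step_merge:
  "tight_edge st = Some e \<Longrightarrow>
   step st = st\<lparr>comps := insert (\<Union>(blocks_meeting (comps st) e)) (comps st - blocks_meeting (comps st) e),
                fam := insert (\<Union>(blocks_meeting (comps st) e)) (fam st)\<rparr>"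
  by (simp add: mg_step_def Let_def)

lemma step_stop: "tight_edge st = None \<Longrightarrow> \<not> some_active st \<Longrightarrow> step st = st"
  by (simp add: mg_step_def Let_def)

lemma step_grow:
  "tight_edge st = None \<Longrightarrow> some_active st \<Longrightarrow>
   step st = st\<lparr>mtime := mtime st + grow_time st,
                yv := (\<lambda>S. if S \<in> active_comps st then yv st S + grow_time st else yv st S)\<rparr>"
  unfolding mg_step_def Let_def active_comps_def[symmetric] grow_time_def[symmetric] by simp

lemma run_0: "run 0 = mg_init V"
  by (simp add: mg_run_def)

lemma run_Suc: "run (Suc k) = step (run k)"
  by (simp add: mg_run_def)

lemma tight_edge_Some:
  "tight_edge st = Some e \<Longrightarrow> e \<in> set eo \<and> crosses (comps st) e \<and> load (fam st) (yv st) e = c e"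
  by (auto simp: find_Some_iff)

lemma tight_edge_None:
  "tight_edge st = None \<Longrightarrow> e \<in> set eo \<Longrightarrow> crosses (comps st) e \<Longrightarrow> load (fam st) (yv st) e \<noteq> c e"
  by (auto simp: find_None_iff)

lemma edge_pair: "e \<in> set eo \<Longrightarrow> \<exists>u v. e = {u, v} \<and> u \<noteq> v \<and> u \<in> V \<and> v \<in> V"
  using edge_pair_card[of e] by (auto simp: card_2_iff)

definition run_invariant :: "'v mstate \<Rightarrow> bool" where
  "run_invariant st \<longleftrightarrow> partition_on V (comps st) \<and> finite (fam st) \<and> comps st \<subseteq> fam st \<and>
     (\<forall>S\<in>fam st. \<exists>C\<in>comps st. S \<subseteq> C) \<and>
     (\<forall>S. S \<notin> fam st \<longrightarrow> yv st S = 0) \<and> (\<forall>S. 0 \<le> yv st S) \<and>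
     (\<forall>e\<in>set eo. crosses (comps st) e \<longrightarrow> load (fam st) (yv st) e \<le> c e)"

lemma run_invariantD:
  assumes "run_invariant st"
  shows "partition_on V (comps st)" "finite (fam st)" "comps st \<subseteq> fam st"
    "\<And>S. S \<in> fam st \<Longrightarrow> \<exists>C\<in>comps st. S \<subseteq> C"
    "\<And>S. S \<notin> fam st \<Longrightarrow> yv st S = 0" "\<And>S. 0 \<le> yv st S"
    "\<And>e. e \<in> set eo \<Longrightarrow> crosses (comps st) e \<Longrightarrow> load (fam st) (yv st) e \<le> c e"
  using assms unfolding run_invariant_def by blast+

lemma run_invariant_init: "run_invariant (mg_init V)"
proof -
  have "load ((\<lambda>v. {v}) ` V) (\<lambda>_. 0) e \<le> c e" if "e \<in> set eo" for e
    using cost_nonneg[OF that] by (simp add: load_def)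
  then show ?thesis
    using finite_V partition_on_singletons[of V] unfolding run_invariant_def mg_init_def by auto
qed

lemma tight_edge_blocks:
  assumes "run_invariant st" "tight_edge st = Some e"
  obtains u v Cu Cv where "e = {u, v}" "u \<noteq> v" "u \<in> V" "v \<in> V" "Cu \<in> comps st" "Cv \<in> comps st"
    "u \<in> Cu" "v \<in> Cv" "Cu \<noteq> Cv" "blocks_meeting (comps st) e = {Cu, Cv}"
proof -
  note P = run_invariantD(1)[OF assms(1)]
  have e: "e \<in> set eo" "crosses (comps st) e" using tight_edge_Some[OF assms(2)] by auto
  obtain u v where uv: "e = {u, v}" "u \<noteq> v" "u \<in> V" "v \<in> V" using edge_pair[OF e(1)] by blast
  obtain Cu where Cu: "Cu \<in> comps st" "u \<in> Cu" using partition_on_block_exists[OF P uv(3)] by blast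
  obtain Cv where Cv: "Cv \<in> comps st" "v \<in> Cv" using partition_on_block_exists[OF P uv(4)] by blast
  have "Cu \<noteq> Cv"
    using e(2) Cu Cv unfolding uv(1) crosses_pair_iff[OF P uv(3,2)] by blast
  moreover have "blocks_meeting (comps st) e = {Cu, Cv}"
  proof
    show "blocks_meeting (comps st) e \<subseteq> {Cu, Cv}"
    proof
      fix C assume "C \<in> blocks_meeting (comps st) e"
      then have "C \<in> comps st" "u \<in> C \<or> v \<in> C" using uv(1) by auto
      then show "C \<in> {Cu, Cv}" using partition_on_block_unique[OF P] Cu Cv by blast
    qed
    show "{Cu, Cv} \<subseteq> blocks_meeting (comps st) e" using Cu Cv uv(1) by blast
  qed
  ultimately show ?thesis by (intro that[OF uv Cu(1) Cv(1) Cu(2) Cv(2)])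
qed

lemma merged_block_not_in_fam:
  assumes "run_invariant st" "tight_edge st = Some e" "e = {u, v}" "u \<noteq> v" "u \<in> V"
    "Cu \<in> comps st" "Cv \<in> comps st" "u \<in> Cu" "v \<in> Cv"
  shows "Cu \<union> Cv \<notin> fam st"
proof
  assume "Cu \<union> Cv \<in> fam st"
  then obtain C where "C \<in> comps st" "Cu \<union> Cv \<subseteq> C" using run_invariantD(4)[OF assms(1)] by blast
  moreover have "crosses (comps st) {u, v}" using tight_edge_Some[OF assms(2)] assms(3) by simp
  ultimately show False
    using assms(8,9) unfolding crosses_pair_iff[OF run_invariantD(1)[OF assms(1)] assms(5,4)] by blast
qed


definition vertex_dual :: "'v mstate \<Rightarrow> 'v \<Rightarrow> real" where
  "vertex_dual st u = (\<Sum>S\<in>fam st. if u \<in> S then yv st S else 0)"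

definition vertex_active :: "'v mstate \<Rightarrow> 'v \<Rightarrow> bool" where
  "vertex_active st u \<longleftrightarrow> (\<exists>C\<in>active_comps st. u \<in> C)"

lemma load_eq_vertex_dual:
  assumes "run_invariant st" "u \<noteq> v" "u \<in> V" "crosses (comps st) {u, v}"
  shows "load (fam st) (yv st) {u, v} = vertex_dual st u + vertex_dual st v"
proof -
  have not_both: "\<not> (u \<in> S \<and> v \<in> S)" if S: "S \<in> fam st" for S
  proof
    assume "u \<in> S \<and> v \<in> S"
    moreover obtain C where "C \<in> comps st" "S \<subseteq> C" using run_invariantD(4)[OF assms(1) S] by blast
    ultimately show False
      using assms(4) unfolding crosses_pair_iff[OF run_invariantD(1)[OF assms(1)] assms(3,2)] by blast
  qed
  have "load (fam st) (yv st) {u, v}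
      = (\<Sum>S\<in>fam st. (if u \<in> S then yv st S else 0) + (if v \<in> S then yv st S else 0))"
    unfolding load_def by (rule sum.cong) (use not_both assms(2) in \<open>auto simp: in_cut_pair\<close>)
  then show ?thesis by (simp add: sum.distrib vertex_dual_def)
qed

lemma load_grow:
  assumes "run_invariant st" "e \<in> set eo" "crosses (comps st) e" "A \<subseteq> comps st"
  shows "load (fam st) (\<lambda>S. if S \<in> A then yv st S + d else yv st S) e
       = load (fam st) (yv st) e + d * real (card (blocks_meeting A e))"
proof -
  obtain u v where e: "e = {u, v}" "u \<noteq> v" "u \<in> V" using edge_pair[OF assms(2)] by blast
  have cut: "in_cut e C \<longleftrightarrow> e \<inter> C \<noteq> {}" if C: "C \<in> comps st" for C
  proof -
    have "\<not> (u \<in> C \<and> v \<in> C)"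
      using C assms(3) unfolding e(1) crosses_pair_iff[OF run_invariantD(1)[OF assms(1)] e(3,2)] by blast
    then show ?thesis unfolding e(1) in_cut_pair[OF e(2)] by blast
  qed
  have "load (fam st) (\<lambda>S. if S \<in> A then yv st S + d else yv st S) e
     = (\<Sum>S\<in>fam st. (if in_cut e S then yv st S else 0) + (if S \<in> blocks_meeting A e then d else 0))"
    unfolding load_def by (rule sum.cong) (use cut assms(4) in auto)
  also have "\<dots> = load (fam st) (yv st) e + (\<Sum>S\<in>fam st. if S \<in> blocks_meeting A e then d else 0)"
    by (simp add: sum.distrib load_def)
  also have "(\<Sum>S\<in>fam st. if S \<in> blocks_meeting A e then d else 0) = d * real (card (blocks_meeting A e))"
    using assms(4) run_invariantD(3)[OF assms(1)]
    by (intro sum_indicator_const[OF run_invariantD(2)[OF assms(1)]]) auto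
  finally show ?thesis .
qed

lemma card_active_blocks_containing:
  assumes "run_invariant st"
  shows "card {C\<in>active_comps st. u \<in> C} = (if vertex_active st u then 1 else 0)"
proof (cases "vertex_active st u")
  case True
  then obtain C where C: "C \<in> active_comps st" "u \<in> C" unfolding vertex_active_def by blast
  have "{C\<in>active_comps st. u \<in> C} = {C}"
    using C partition_on_block_unique[OF run_invariantD(1)[OF assms]] unfolding active_comps_def by blast
  then show ?thesis using True by simp
next
  case False
  then have "{C\<in>active_comps st. u \<in> C} = {}" unfolding vertex_active_def by blast
  then show ?thesis using False by (simp only: card.empty if_False)
qed

lemma card_active_blocks_meeting:
  assumes "run_invariant st" "u \<noteq> v" "u \<in> V" "crosses (comps st) {u, v}"
  shows "real (card (blocks_meeting (active_comps st) {u, v}))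
       = (if vertex_active st u then 1 else 0) + (if vertex_active st v then 1 else 0)"
proof -
  note P = run_invariantD(1)[OF assms(1)]
  have fin: "finite (active_comps st)"
    using finite_elements[OF finite_V P] unfolding active_comps_def by simp
  have split: "blocks_meeting (active_comps st) {u, v} = {C\<in>active_comps st. u \<in> C} \<union> {C\<in>active_comps st. v \<in> C}"
    by auto
  have "{C\<in>active_comps st. u \<in> C} \<inter> {C\<in>active_comps st. v \<in> C} = {}"
    using assms(4) unfolding crosses_pair_iff[OF P assms(3,2)] active_comps_def by blast
  then have "card (blocks_meeting (active_comps st) {u, v})
      = card {C\<in>active_comps st. u \<in> C} + card {C\<in>active_comps st. v \<in> C}"
    unfolding split using fin by (intro card_Un_disjoint) auto
  then show ?thesis using card_active_blocks_containing[OF assms(1)] by simp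
qed

lemma grow_candidates_finite:
  "finite {s w - mtime st | w. w \<in> V \<and> mtime st < s w}"
  "finite {(c e - load (fam st) (yv st) e) / real (card (blocks_meeting (active_comps st) e)) | e.
        e \<in> set eo \<and> crosses (comps st) e \<and> 0 < card (blocks_meeting (active_comps st) e)}"
  using finite_V by (auto intro: finite_image_set)

lemma grow_time_le_deadline: "w \<in> V \<Longrightarrow> mtime st < s w \<Longrightarrow> grow_time st \<le> s w - mtime st"
  unfolding grow_time_def using grow_candidates_finite by (intro Min_le) auto

lemma grow_time_le_slack:
  "e \<in> set eo \<Longrightarrow> crosses (comps st) e \<Longrightarrow> 0 < card (blocks_meeting (active_comps st) e) \<Longrightarrow>
   grow_time st \<le> (c e - load (fam st) (yv st) e) / real (card (blocks_meeting (active_comps st) e))"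
  unfolding grow_time_def using grow_candidates_finite by (intro Min_le) auto

lemma grow_time_attained:
  assumes "run_invariant st" "some_active st"
  shows "(\<exists>w\<in>V. mtime st < s w \<and> grow_time st = s w - mtime st) \<or>
    (\<exists>e\<in>set eo. crosses (comps st) e \<and> 0 < card (blocks_meeting (active_comps st) e) \<and>
       grow_time st = (c e - load (fam st) (yv st) e) / real (card (blocks_meeting (active_comps st) e)))"
proof -
  obtain C w where "C \<in> comps st" "w \<in> C" "mtime st < s w"
    using assms(2) unfolding is_active_def by blast
  then have "w \<in> V" using partition_on_block_subset[OF run_invariantD(1)[OF assms(1)]] by blast
  then have "grow_time st \<in> {s w - mtime st | w. w \<in> V \<and> mtime st < s w} \<union>
     {(c e - load (fam st) (yv st) e) / real (card (blocks_meeting (active_comps st) e)) | e.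
        e \<in> set eo \<and> crosses (comps st) e \<and> 0 < card (blocks_meeting (active_comps st) e)}"
    unfolding grow_time_def using grow_candidates_finite \<open>mtime st < s w\<close> by (intro Min_in) auto
  then show ?thesis by blast
qed

lemma grow_time_pos:
  assumes "run_invariant st" "tight_edge st = None" "some_active st"
  shows "0 < grow_time st"
  using grow_time_attained[OF assms(1,3)]
proof
  assume "\<exists>e\<in>set eo. crosses (comps st) e \<and> 0 < card (blocks_meeting (active_comps st) e) \<and>
       grow_time st = (c e - load (fam st) (yv st) e) / real (card (blocks_meeting (active_comps st) e))"
  then obtain e where e: "e \<in> set eo" "crosses (comps st) e" "0 < card (blocks_meeting (active_comps st) e)"
    "grow_time st = (c e - load (fam st) (yv st) e) / real (card (blocks_meeting (active_comps st) e))"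
    by blast
  have "load (fam st) (yv st) e < c e"
    using run_invariantD(7)[OF assms(1) e(1,2)] tight_edge_None[OF assms(2) e(1,2)] by simp
  then show ?thesis using e(3,4) by simp
qed auto

lemma run_invariant_merge:
  assumes I: "run_invariant st" and e: "tight_edge st = Some e"
  shows "run_invariant (step st)"
proof -
  obtain u v Cu Cv where m: "e = {u, v}" "u \<noteq> v" "u \<in> V" "v \<in> V" "Cu \<in> comps st" "Cv \<in> comps st"
    "u \<in> Cu" "v \<in> Cv" "Cu \<noteq> Cv" "blocks_meeting (comps st) e = {Cu, Cv}"
    by (rule tight_edge_blocks[OF I e])
  define N where "N = Cu \<union> Cv"
  have st': "comps (step st) = insert N (comps st - {Cu, Cv})" "fam (step st) = insert N (fam st)"
    "yv (step st) = yv st"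
    using step_merge[OF e] m(10) unfolding N_def by simp_all
  note P = run_invariantD(1)[OF I]
  have N_new: "N \<notin> fam st" unfolding N_def by (rule merged_block_not_in_fam[OF I e m(1-3,5-8)])
  have load_eq: "load (fam (step st)) (yv (step st)) f = load (fam st) (yv st) f" for f
    unfolding st' load_def using run_invariantD(2,5)[OF I] N_new by simp
  have crosses_old: "crosses (comps st) f" if f: "f \<in> set eo" "crosses (comps (step st)) f" for f
  proof -
    obtain a b where ab: "f = {a, b}" "a \<noteq> b" "a \<in> V" using edge_pair[OF f(1)] by blast
    show ?thesis
      using f(2) unfolding ab(1) st' N_def by (rule crosses_merge_imp[OF P m(5,6) ab(3,2)])
  qed
  have fam_refines: "\<exists>C\<in>comps (step st). S \<subseteq> C" if S: "S \<in> fam (step st)" for S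
  proof (cases "S = N")
    case False
    then obtain C where "C \<in> comps st" "S \<subseteq> C" using S run_invariantD(4)[OF I] unfolding st' by auto
    then show ?thesis unfolding st' N_def by (cases "C \<in> {Cu, Cv}") auto
  qed (simp add: st')
  show ?thesis
    unfolding run_invariant_def
  proof (intro conjI allI ballI impI)
    show "partition_on V (comps (step st))" unfolding st' N_def by (rule partition_on_merge[OF P m(5,6)])
    show "finite (fam (step st))" "comps (step st) \<subseteq> fam (step st)"
      using run_invariantD(2,3)[OF I] unfolding st' by auto
    show "yv (step st) S = 0" if "S \<notin> fam (step st)" for S
      using that run_invariantD(5)[OF I] unfolding st' by simp
    show "0 \<le> yv (step st) S" for S using run_invariantD(6)[OF I] unfolding st' by simp
    show "load (fam (step st)) (yv (step st)) f \<le> c f" if "f \<in> set eo" "crosses (comps (step st)) f" for f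
      using run_invariantD(7)[OF I that(1) crosses_old[OF that]] unfolding load_eq .
  qed (rule fam_refines)
qed

lemma run_invariant_grow:
  assumes I: "run_invariant st" and "tight_edge st = None" "some_active st"
  shows "run_invariant (step st)"
proof -
  define y' where "y' = (\<lambda>S. if S \<in> active_comps st then yv st S + grow_time st else yv st S)"
  have st': "step st = st\<lparr>mtime := mtime st + grow_time st, yv := y'\<rparr>"
    unfolding y'_def by (rule step_grow[OF assms(2,3)])
  have A: "active_comps st \<subseteq> comps st" unfolding active_comps_def by auto
  have "load (fam st) y' f \<le> c f" if f: "f \<in> set eo" "crosses (comps st) f" for f
  proof (cases "card (blocks_meeting (active_comps st) f) = 0")
    case True
    then show ?thesis using load_grow[OF I f A] run_invariantD(7)[OF I f] unfolding y'_def by simp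
  next
    case False
    then show ?thesis
      using load_grow[OF I f A] grow_time_le_slack[OF f] unfolding y'_def
      by (simp add: pos_le_divide_eq mult.commute)
  qed
  moreover have "y' S = 0" if "S \<notin> fam st" for S
    using that run_invariantD(3,5)[OF I] A unfolding y'_def by auto
  moreover have "0 \<le> y' S" for S
    using run_invariantD(6)[OF I] grow_time_pos[OF assms] unfolding y'_def by (simp add: add_nonneg_nonneg)
  ultimately show ?thesis using I unfolding st' run_invariant_def by simp
qed

lemma run_invariant_step:
  assumes "run_invariant st"
  shows "run_invariant (step st)"
proof (cases "tight_edge st")
  case None
  then show ?thesis
    by (cases "some_active st") (simp_all add: run_invariant_grow[OF assms None] step_stop assms)
qed (rule run_invariant_merge[OF assms])

lemma run_invariant_run: "run_invariant (run k)"
  by (induction k) (simp_all add: run_0 run_Suc run_invariant_init run_invariant_step)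


section \<open>Termination and the state at a given time\<close>

lemma merge_keeps_time_and_duals:
  "tight_edge st = Some e \<Longrightarrow> mtime (step st) = mtime st \<and> yv (step st) = yv st"
  by (simp add: step_merge)

lemma merge_card_comps_less:
  assumes "run_invariant st" "tight_edge st = Some e"
  shows "card (comps (step st)) < card (comps st)"
proof -
  obtain u v Cu Cv where m: "Cu \<in> comps st" "Cv \<in> comps st" "Cu \<noteq> Cv"
    "blocks_meeting (comps st) e = {Cu, Cv}"
    by (rule tight_edge_blocks[OF assms])
  have "comps (step st) = insert (Cu \<union> Cv) (comps st - {Cu, Cv})"
    using step_merge[OF assms(2)] m(4) by simp
  then show ?thesis
    using card_merge_less[OF finite_elements[OF finite_V run_invariantD(1)[OF assms(1)]] m(1-3)] by simp
qed

lemma advancing_step_grows: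
  assumes "mtime st < mtime (step st)"
  shows "tight_edge st = None" "some_active st"
proof -
  show None: "tight_edge st = None"
    using assms merge_keeps_time_and_duals by (cases "tight_edge st") auto
  show "some_active st"
  proof (rule ccontr)
    assume "\<not> some_active st"
    then have "step st = st" by (rule step_stop[OF None])
    then show False using assms by simp
  qed
qed

lemma mtime_step_mono:
  assumes "run_invariant st"
  shows "mtime st \<le> mtime (step st)"
proof (cases "tight_edge st")
  case (Some e)
  then show ?thesis using merge_keeps_time_and_duals by simp
next
  case None
  show ?thesis
  proof (cases "some_active st")
    case True
    then show ?thesis using step_grow[OF None True] grow_time_pos[OF assms None True] by simp
  qed (simp add: step_stop[OF None])
qed

lemma mtime_mono: "i \<le> j \<Longrightarrow> mtime (run i) \<le> mtime (run j)"
  by (rule lift_Suc_mono_le[of "\<lambda>k. mtime (run k)"]) (simp_all add: run_Suc mtime_step_mono run_invariant_run)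

lemma mtime_nonneg: "0 \<le> mtime (run k)"
  using mtime_mono[of 0 k] by (simp add: run_0 mg_init_def)

lemma grow_makes_progress:
  assumes "run_invariant st" "tight_edge st = None" "some_active st"
  shows "{w\<in>V. mtime (step st) < s w} \<subset> {w\<in>V. mtime st < s w} \<or> tight_edge (step st) \<noteq> None"
  using grow_time_attained[OF assms(1,3)]
proof
  assume "\<exists>w\<in>V. mtime st < s w \<and> grow_time st = s w - mtime st"
  then obtain w where "w \<in> V" "mtime st < s w" "grow_time st = s w - mtime st" by blast
  then have "w \<in> {w\<in>V. mtime st < s w} - {w\<in>V. mtime (step st) < s w}"
    using step_grow[OF assms(2,3)] by simp
  moreover have "{w\<in>V. mtime (step st) < s w} \<subseteq> {w\<in>V. mtime st < s w}"
    using mtime_step_mono[OF assms(1)] by auto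
  ultimately show ?thesis by blast
next
  assume "\<exists>e\<in>set eo. crosses (comps st) e \<and> 0 < card (blocks_meeting (active_comps st) e) \<and>
    grow_time st = (c e - load (fam st) (yv st) e) / real (card (blocks_meeting (active_comps st) e))"
  then obtain e where e: "e \<in> set eo" "crosses (comps st) e" "0 < card (blocks_meeting (active_comps st) e)"
    "grow_time st = (c e - load (fam st) (yv st) e) / real (card (blocks_meeting (active_comps st) e))"
    by blast
  have A: "active_comps st \<subseteq> comps st" unfolding active_comps_def by auto
  have "load (fam (step st)) (yv (step st)) e = c e"
    using load_grow[OF assms(1) e(1,2) A] e(3,4) step_grow[OF assms(2,3)] by simp
  moreover have "comps (step st) = comps st" using step_grow[OF assms(2,3)] by simp
  ultimately show ?thesis using e(1,2) by (auto simp: find_None_iff)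
qed

text \<open>Every merge removes a component and every growth phase either passes a deadline or makes
  an edge tight, so the run reaches a fixpoint.\<close>

definition potential :: "'v mstate \<Rightarrow> nat" where
  "potential st = 3 * card (comps st) + 3 * card {w\<in>V. mtime st < s w} + (if tight_edge st = None then 1 else 0)"

lemma potential_decreases:
  assumes "run_invariant st" "step st \<noteq> st"
  shows "potential (step st) < potential st"
proof (cases "tight_edge st")
  case (Some e)
  then show ?thesis
    using merge_card_comps_less[OF assms(1) Some] merge_keeps_time_and_duals[OF Some]
    unfolding potential_def by simp
next
  case None
  then have act: "some_active st" using assms(2) step_stop by blast
  have fin: "finite {w\<in>V. mtime st < s w}" using finite_V by simp
  have "comps (step st) = comps st" using step_grow[OF None act] by simp
  moreover have "card {w\<in>V. mtime (step st) < s w} \<le> card {w\<in>V. mtime st < s w}"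
    using mtime_step_mono[OF assms(1)] fin by (intro card_mono) auto
  moreover have "card {w\<in>V. mtime (step st) < s w} < card {w\<in>V. mtime st < s w} \<or> tight_edge (step st) \<noteq> None"
    using grow_makes_progress[OF assms(1) None act] psubset_card_mono[OF fin] by blast
  ultimately show ?thesis using None unfolding potential_def by auto
qed

lemma run_reaches_fixpoint: "\<exists>K. run (Suc K) = run K"
proof (rule ccontr)
  assume "\<nexists>K. run (Suc K) = run K"
  then have decrease: "potential (run (Suc k)) < potential (run k)" for k
    using potential_decreases[OF run_invariant_run] by (simp add: run_Suc)
  have "potential (run k) + k \<le> potential (run 0)" for k
  proof (induction k)
    case (Suc k)
    then show ?case using decrease[of k] by simp
  qed simp
  from this[of "Suc (potential (run 0))"] show False by simp
qed

lemma run_fixpoint_stays: "run (Suc K) = run K \<Longrightarrow> K \<le> j \<Longrightarrow> run j = run K"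
proof (induction j)
  case (Suc j)
  then show ?case by (cases "K = Suc j") (simp_all add: run_Suc)
qed simp

lemma fixpoint_stopped:
  assumes "run_invariant st" "step st = st"
  shows "tight_edge st = None" "\<not> some_active st"
proof -
  show None: "tight_edge st = None"
  proof (rule ccontr)
    assume "tight_edge st \<noteq> None"
    then obtain e where "tight_edge st = Some e" by blast
    then show False using merge_card_comps_less[OF assms(1)] assms(2) by simp
  qed
  show "\<not> some_active st"
  proof
    assume act: "some_active st"
    have "mtime (step st) = mtime st + grow_time st" using step_grow[OF None act] by simp
    then show False using grow_time_pos[OF assms(1) None act] assms(2) by simp
  qed
qed

definition state_at :: "real \<Rightarrow> nat \<Rightarrow> bool" where
  "state_at x k \<longleftrightarrow> mtime (run k) \<le> x \<and> (x < mtime (run (Suc k)) \<or> run (Suc k) = run k)"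

lemma active_comp_at_iff:
  "active_comp_at V eo c s x S \<longleftrightarrow> (\<exists>k. state_at x k \<and> S \<in> comps (run k) \<and> is_active s x S)"
  unfolding active_comp_at_def state_at_def by blast

lemma state_at_exists:
  assumes "0 \<le> x"
  shows "\<exists>k. state_at x k"
proof -
  obtain K where K: "run (Suc K) = run K" using run_reaches_fixpoint by blast
  define k where "k = (LEAST k. x < mtime (run (Suc k)) \<or> run (Suc k) = run k)"
  have next_event: "x < mtime (run (Suc k)) \<or> run (Suc k) = run k"
    unfolding k_def by (rule LeastI[of _ K]) (use K in simp)
  have "mtime (run k) \<le> x"
  proof (cases k)
    case 0
    then show ?thesis using assms by (simp add: run_0 mg_init_def)
  next
    case (Suc j)
    then have "\<not> (x < mtime (run (Suc j)) \<or> run (Suc j) = run j)"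
      unfolding k_def by (intro not_less_Least) simp
    then show ?thesis using Suc by simp
  qed
  then show ?thesis using next_event unfolding state_at_def by blast
qed

lemma state_at_order:
  assumes "state_at x1 k1" "state_at x2 k2" "x1 \<le> x2"
  shows "run k1 = run k2 \<or> (k1 < k2 \<and> x1 < mtime (run (Suc k1)))"
proof -
  have k2_stops: "run k2 = run k1" if "k2 < k1"
  proof -
    have "mtime (run (Suc k2)) \<le> x2"
      using that mtime_mono[of "Suc k2" k1] assms unfolding state_at_def by simp
    then have "run (Suc k2) = run k2" using assms(2) unfolding state_at_def by simp
    then show ?thesis using run_fixpoint_stays[of k2 k1] that by simp
  qed
  show ?thesis
  proof (cases "run (Suc k1) = run k1")
    case True
    then show ?thesis using run_fixpoint_stays[OF True, of k2] k2_stops by (cases "k1 \<le> k2") auto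
  next
    case False
    then show ?thesis using assms(1) k2_stops unfolding state_at_def by (cases k1 k2 rule: linorder_cases) auto
  qed
qed


section \<open>Vertex loads along a run\<close>

lemma vertex_dual_merge:
  assumes "run_invariant st" "tight_edge st = Some e"
  shows "vertex_dual (step st) u = vertex_dual st u"
proof -
  obtain u v Cu Cv where m: "e = {u, v}" "u \<noteq> v" "u \<in> V" "Cu \<in> comps st" "Cv \<in> comps st"
    "u \<in> Cu" "v \<in> Cv" "blocks_meeting (comps st) e = {Cu, Cv}"
    by (rule tight_edge_blocks[OF assms])
  have new: "Cu \<union> Cv \<notin> fam st" by (rule merged_block_not_in_fam[OF assms m(1-7)])
  have fy: "fam (step st) = insert (Cu \<union> Cv) (fam st)" "yv (step st) = yv st"
    using step_merge[OF assms(2)] m(8) by simp_all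
  show ?thesis
    unfolding vertex_dual_def fy using new run_invariantD(2,5)[OF assms(1)] by simp
qed

lemma vertex_dual_grow:
  assumes "run_invariant st" "tight_edge st = None" "some_active st"
  shows "vertex_dual (step st) u = vertex_dual st u + (if vertex_active st u then grow_time st else 0)"
proof -
  have sub: "{C\<in>active_comps st. u \<in> C} \<subseteq> fam st"
    using run_invariantD(3)[OF assms(1)] unfolding active_comps_def by auto
  have "vertex_dual (step st) u
      = (\<Sum>S\<in>fam st. (if u \<in> S then yv st S else 0) + (if S \<in> {C\<in>active_comps st. u \<in> C} then grow_time st else 0))"
    unfolding vertex_dual_def step_grow[OF assms(2,3)] by (rule sum.cong) auto
  also have "\<dots> = vertex_dual st u + grow_time st * real (card {C\<in>active_comps st. u \<in> C})"
    unfolding sum.distrib vertex_dual_def sum_indicator_const[OF run_invariantD(2)[OF assms(1)] sub] ..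
  finally show ?thesis using card_active_blocks_containing[OF assms(1)] by simp
qed

lemma vertex_dual_nonneg:
  assumes "run_invariant st"
  shows "0 \<le> vertex_dual st u"
  unfolding vertex_dual_def using run_invariantD(6)[OF assms] by (intro sum_nonneg) simp

lemma vertex_dual_init: "vertex_dual (run 0) u = 0"
  unfolding vertex_dual_def by (intro sum.neutral) (simp add: run_0 mg_init_def)

lemma vertex_dual_step_mono:
  assumes "run_invariant st"
  shows "vertex_dual st u \<le> vertex_dual (step st) u"
proof (cases "tight_edge st")
  case (Some e)
  then show ?thesis using vertex_dual_merge[OF assms Some] by simp
next
  case None
  show ?thesis
  proof (cases "some_active st")
    case True
    then show ?thesis using vertex_dual_grow[OF assms None True] grow_time_pos[OF assms None True] by simp
  qed (simp add: step_stop[OF None])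
qed

lemma vertex_dual_mono: "i \<le> j \<Longrightarrow> vertex_dual (run i) u \<le> vertex_dual (run j) u"
  by (rule lift_Suc_mono_le[of "\<lambda>k. vertex_dual (run k) u"])
    (simp_all add: run_Suc vertex_dual_step_mono run_invariant_run)

lemma comps_refine_step:
  assumes "C \<in> comps st"
  shows "\<exists>D\<in>comps (step st). C \<subseteq> D"
proof (cases "tight_edge st")
  case (Some e)
  show ?thesis
  proof (cases "e \<inter> C = {}")
    case True
    then show ?thesis using assms unfolding step_merge[OF Some] by auto
  next
    case False
    then have "C \<subseteq> \<Union>(blocks_meeting (comps st) e)" using assms by blast
    then show ?thesis unfolding step_merge[OF Some] by simp
  qed
next
  case None
  then show ?thesis
    using assms step_grow[OF None] step_stop[OF None] by (cases "some_active st") auto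
qed

lemma comps_refine: "i \<le> j \<Longrightarrow> C \<in> comps (run i) \<Longrightarrow> \<exists>D\<in>comps (run j). C \<subseteq> D"
proof (induction j rule: dec_induct)
  case (step j)
  then obtain D where "D \<in> comps (run j)" "C \<subseteq> D" by blast
  then show ?case using comps_refine_step[of D "run j"] by (auto simp: run_Suc)
qed blast

lemma comps_refine_state_at:
  assumes "state_at x k" "state_at x' k'" "x \<le> x'" "C \<in> comps (run k)"
  shows "\<exists>D\<in>comps (run k'). C \<subseteq> D"
  using state_at_order[OF assms(1-3)] comps_refine[of k k' C] assms(4) by auto

lemma grow_step_of_run:
  assumes "mtime (run k) < mtime (run (Suc k))"
  shows "tight_edge (run k) = None" "some_active (run k)"
    "mtime (run (Suc k)) = mtime (run k) + grow_time (run k)"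
  using advancing_step_grows[of "run k"] assms step_grow by (simp_all add: run_Suc)

definition dual_at :: "nat \<Rightarrow> real \<Rightarrow> 'v \<Rightarrow> real" where
  "dual_at k x u = vertex_dual (run k) u + (if vertex_active (run k) u then x - mtime (run k) else 0)"

lemma vertex_dual_le_dual_at: "state_at x k \<Longrightarrow> vertex_dual (run k) u \<le> dual_at k x u"
  unfolding dual_at_def state_at_def by simp

lemma dual_at_le: "state_at x k \<Longrightarrow> dual_at k x u \<le> vertex_dual (run k) u + (x - mtime (run k))"
  unfolding dual_at_def state_at_def by simp

lemma dual_at_fixpoint: "run (Suc k) = run k \<Longrightarrow> dual_at k x u = vertex_dual (run k) u"
  using fixpoint_stopped(2)[OF run_invariant_run, of k]
  unfolding dual_at_def vertex_active_def active_comps_def by (auto simp: run_Suc)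

lemma dual_at_le_next:
  assumes "state_at x k" "run (Suc k) \<noteq> run k"
  shows "dual_at k x u \<le> vertex_dual (run (Suc k)) u"
proof -
  have x: "mtime (run k) \<le> x" "x < mtime (run (Suc k))" using assms unfolding state_at_def by auto
  note g = grow_step_of_run[OF order.strict_trans1[OF x]]
  have "vertex_dual (run (Suc k)) u = vertex_dual (run k) u + (if vertex_active (run k) u then grow_time (run k) else 0)"
    using vertex_dual_grow[OF run_invariant_run g(1,2)] by (simp add: run_Suc)
  then show ?thesis unfolding dual_at_def using x g(3) by simp
qed

lemma dual_at_mono:
  assumes "state_at x1 k1" "state_at x2 k2" "x1 \<le> x2"
  shows "dual_at k1 x1 u \<le> dual_at k2 x2 u"
  using state_at_order[OF assms]
proof
  assume "run k1 = run k2"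
  then show ?thesis unfolding dual_at_def using assms(3) by simp
next
  assume k: "k1 < k2 \<and> x1 < mtime (run (Suc k1))"
  show ?thesis
  proof (cases "run (Suc k1) = run k1")
    case True
    then have "run k2 = run k1" using run_fixpoint_stays[OF True, of k2] k by simp
    then show ?thesis unfolding dual_at_def using assms(3) by simp
  next
    case False
    have "dual_at k1 x1 u \<le> vertex_dual (run (Suc k1)) u" by (rule dual_at_le_next[OF assms(1) False])
    also have "\<dots> \<le> vertex_dual (run k2) u" using vertex_dual_mono[of "Suc k1" k2 u] k by simp
    also have "\<dots> \<le> dual_at k2 x2 u" by (rule vertex_dual_le_dual_at[OF assms(2)])
    finally show ?thesis .
  qed
qed

text \<open>The component of u contains w, so it stays active until time s w.\<close>

lemma vertex_dual_growth:
  assumes "k1 \<le> j" "mtime (run j) \<le> s w" "C \<in> comps (run k1)" "u \<in> C" "w \<in> C" "u \<in> V"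
  shows "vertex_dual (run k1) u + (mtime (run j) - mtime (run k1)) \<le> vertex_dual (run j) u"
  using assms(1,2)
proof (induction j rule: dec_induct)
  case (step j)
  have IH: "vertex_dual (run k1) u + (mtime (run j) - mtime (run k1)) \<le> vertex_dual (run j) u"
    using step.IH step.prems mtime_mono[of j "Suc j"] by simp
  show ?case
  proof (cases "mtime (run j) < mtime (run (Suc j))")
    case False
    then show ?thesis using IH vertex_dual_mono[of j "Suc j" u] mtime_mono[of j "Suc j"] by simp
  next
    case True
    note g = grow_step_of_run[OF True]
    obtain D where "D \<in> comps (run j)" "C \<subseteq> D" using comps_refine[OF step.hyps(1) assms(3)] by blast
    then have "vertex_active (run j) u"
      using True step.prems assms(4,5) unfolding vertex_active_def active_comps_def is_active_def by force
    then show ?thesis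
      using IH g(3) vertex_dual_grow[OF run_invariant_run g(1,2)] by (simp add: run_Suc)
  qed
qed simp

lemma dual_at_growth:
  assumes "state_at x1 k1" "state_at x2 k2" "x1 \<le> x2" "x2 \<le> s w"
    and "C \<in> comps (run k1)" "u \<in> C" "w \<in> C" "u \<in> V"
  shows "dual_at k1 x1 u + (x2 - x1) \<le> dual_at k2 x2 u"
  using state_at_order[OF assms(1-3)]
proof
  assume same: "run k1 = run k2"
  show ?thesis
  proof (cases "mtime (run k1) < s w")
    case True
    then have "vertex_active (run k1) u"
      using assms(5-7) unfolding vertex_active_def active_comps_def is_active_def by blast
    then show ?thesis unfolding dual_at_def using same by simp
  next
    case False
    then have "x1 = x2" using assms(1,3,4) unfolding state_at_def by simp
    then show ?thesis using same by (simp add: dual_at_def)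
  qed
next
  assume "k1 < k2 \<and> x1 < mtime (run (Suc k1))"
  then have k: "k1 \<le> k2" by simp
  have m2: "mtime (run k2) \<le> x2" using assms(2) unfolding state_at_def by simp
  have "dual_at k1 x1 u \<le> vertex_dual (run k1) u + (x1 - mtime (run k1))" by (rule dual_at_le[OF assms(1)])
  moreover have "vertex_dual (run k1) u + (mtime (run k2) - mtime (run k1)) \<le> vertex_dual (run k2) u"
    using vertex_dual_growth[OF k _ assms(5-8)] m2 assms(4) by simp
  moreover have "vertex_dual (run k2) u + (x2 - mtime (run k2)) \<le> dual_at k2 x2 u"
  proof (cases "mtime (run k2) < s w")
    case True
    obtain D where "D \<in> comps (run k2)" "C \<subseteq> D" using comps_refine[OF k assms(5)] by blast
    then have "vertex_active (run k2) u"
      using True assms(6,7) unfolding vertex_active_def active_comps_def is_active_def by force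
    then show ?thesis unfolding dual_at_def by simp
  next
    case False
    then have "x2 = mtime (run k2)" using m2 assms(4) by simp
    then show ?thesis using vertex_dual_le_dual_at[OF assms(2)] by simp
  qed
  ultimately show ?thesis by simp
qed

lemma dual_at_slack:
  assumes "state_at x k" "e \<in> set eo" "e = {u, v}" "u \<noteq> v" "u \<in> V" "crosses (comps (run k)) e"
  shows "dual_at k x u + dual_at k x v < c e"
proof -
  note I = run_invariant_run[of k]
  have load: "load (fam (run k)) (yv (run k)) e = vertex_dual (run k) u + vertex_dual (run k) v"
    using load_eq_vertex_dual[OF I assms(4,5)] assms(3,6) by simp
  show ?thesis
  proof (cases "run (Suc k) = run k")
    case True
    have "tight_edge (run k) = None" using fixpoint_stopped(1)[OF I] True by (simp add: run_Suc)
    then have "load (fam (run k)) (yv (run k)) e \<noteq> c e" using tight_edge_None assms(2,6) by blast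
    then show ?thesis using dual_at_fixpoint[OF True] load run_invariantD(7)[OF I assms(2,6)] by simp
  next
    case False
    have x: "mtime (run k) \<le> x" "x < mtime (run (Suc k))" using assms(1) False unfolding state_at_def by auto
    note g = grow_step_of_run[OF order.strict_trans1[OF x]]
    have slack: "load (fam (run k)) (yv (run k)) e < c e"
      using tight_edge_None[OF g(1) assms(2,6)] run_invariantD(7)[OF I assms(2,6)] by simp
    define r where "r = real (card (blocks_meeting (active_comps (run k)) e))"
    have r: "r = (if vertex_active (run k) u then 1 else 0) + (if vertex_active (run k) v then 1 else 0)"
      unfolding r_def using card_active_blocks_meeting[OF I assms(4,5)] assms(3,6) by simp
    have sum: "dual_at k x u + dual_at k x v = load (fam (run k)) (yv (run k)) e + (x - mtime (run k)) * r"
      unfolding dual_at_def load r by (simp add: algebra_simps)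
    show ?thesis
    proof (cases "r = 0")
      case True
      then show ?thesis using sum slack by simp
    next
      case False
      then have "0 < r" using r by (auto split: if_splits)
      then have "grow_time (run k) * r \<le> c e - load (fam (run k)) (yv (run k)) e"
        using grow_time_le_slack[OF assms(2,6)] unfolding r_def by (simp add: pos_le_divide_eq)
      moreover have "(x - mtime (run k)) * r < grow_time (run k) * r" using x g(3) \<open>0 < r\<close> by simp
      ultimately show ?thesis using sum by simp
    qed
  qed
qed

end

section \<open>Comparing runs with ordered deadlines\<close>

locale moat_growing_pair = r1: moat_growing V eo c s + r2: moat_growing V eo c s'
  for V :: "'v set" and eo c s s' +
  assumes deadlines_le: "\<And>w. s w \<le> s' w"
begin

definition dominated_by :: "'v mstate \<Rightarrow> nat \<Rightarrow> bool" where
  "dominated_by st k' \<longleftrightarrow> (\<forall>C\<in>comps st. \<exists>D\<in>comps (r2.run k'). C \<subseteq> D) \<and>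
     (\<forall>u\<in>V. r1.vertex_dual st u \<le> r2.dual_at k' (mtime st) u)"

lemma dominated_by_init:
  assumes "r2.state_at (mtime (r1.run 0)) k'"
  shows "dominated_by (r1.run 0) k'"
  unfolding dominated_by_def
proof (intro conjI ballI)
  fix C assume "C \<in> comps (r1.run 0)"
  then obtain v where "v \<in> V" "C = {v}" by (auto simp: r1.run_0 mg_init_def)
  then show "\<exists>D\<in>comps (r2.run k'). C \<subseteq> D"
    using partition_on_block_exists[OF r2.run_invariantD(1)[OF r2.run_invariant_run]] by blast
next
  fix u
  have "r1.vertex_dual (r1.run 0) u = 0" by (rule r1.vertex_dual_init)
  also have "\<dots> \<le> r2.vertex_dual (r2.run k') u" by (rule r2.vertex_dual_nonneg[OF r2.run_invariant_run])
  also have "\<dots> \<le> r2.dual_at k' (mtime (r1.run 0)) u" by (rule r2.vertex_dual_le_dual_at[OF assms])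
  finally show "r1.vertex_dual (r1.run 0) u \<le> r2.dual_at k' (mtime (r1.run 0)) u" .
qed

text \<open>An edge made tight by the first run cannot still cross the partition of the second run:
  its load there is at least as large, and crossing edges have positive slack.\<close>

lemma tight_edge_joined:
  assumes I: "r1.run_invariant st" and e: "r1.tight_edge st = Some e"
    and k': "r2.state_at (mtime st) k'" and dom: "dominated_by st k'"
    and uv: "e = {u, v}" "u \<noteq> v" "u \<in> V" "v \<in> V"
  shows "\<exists>D\<in>comps (r2.run k'). u \<in> D \<and> v \<in> D"
proof (rule ccontr)
  assume "\<not> (\<exists>D\<in>comps (r2.run k'). u \<in> D \<and> v \<in> D)"
  then have "crosses (comps (r2.run k')) e"
    unfolding uv(1) crosses_pair_iff[OF r2.run_invariantD(1)[OF r2.run_invariant_run] uv(3,2)] .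
  then have "r2.dual_at k' (mtime st) u + r2.dual_at k' (mtime st) v < c e"
    using r1.tight_edge_Some[OF e] by (intro r2.dual_at_slack[OF k' _ uv(1-3)]) simp_all
  moreover have "load (fam st) (yv st) e = r1.vertex_dual st u + r1.vertex_dual st v"
    using r1.load_eq_vertex_dual[OF I uv(2,3)] r1.tight_edge_Some[OF e] uv(1) by simp
  moreover have "r1.vertex_dual st u \<le> r2.dual_at k' (mtime st) u"
    "r1.vertex_dual st v \<le> r2.dual_at k' (mtime st) v"
    using dom uv(3,4) unfolding dominated_by_def by simp_all
  ultimately show False using r1.tight_edge_Some[OF e] by simp
qed

lemma dominated_by_merge:
  assumes I: "r1.run_invariant st" and e: "r1.tight_edge st = Some e"
    and k': "r2.state_at (mtime st) k'" and dom: "dominated_by st k'"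
  shows "dominated_by (r1.step st) k'"
proof -
  obtain u v Cu Cv where m: "e = {u, v}" "u \<noteq> v" "u \<in> V" "v \<in> V" "Cu \<in> comps st" "Cv \<in> comps st"
    "u \<in> Cu" "v \<in> Cv" "blocks_meeting (comps st) e = {Cu, Cv}"
    by (rule r1.tight_edge_blocks[OF I e])
  note P2 = r2.run_invariantD(1)[OF r2.run_invariant_run[of k']]
  obtain D where D: "D \<in> comps (r2.run k')" "u \<in> D" "v \<in> D"
    using tight_edge_joined[OF I e k' dom m(1-4)] by blast
  have inside_D: "C \<subseteq> D" if C: "C \<in> comps st" "w \<in> C" "w \<in> D" for C w
  proof -
    obtain D' where D': "D' \<in> comps (r2.run k')" "C \<subseteq> D'"
      using dom C(1) unfolding dominated_by_def by blast
    have "w \<in> D'" using D'(2) C(2) by blast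
    then have "D' = D" by (rule partition_on_block_unique[OF P2 D'(1) D(1) _ C(3)])
    then show ?thesis using D'(2) by simp
  qed
  have comps: "comps (r1.step st) = insert (Cu \<union> Cv) (comps st - {Cu, Cv})"
    using r1.step_merge[OF e] m(9) by simp
  have "\<exists>D\<in>comps (r2.run k'). C \<subseteq> D" if "C \<in> comps (r1.step st)" for C
  proof (cases "C = Cu \<union> Cv")
    case True
    then show ?thesis using inside_D[OF m(5,7) D(2)] inside_D[OF m(6,8) D(3)] D(1) by blast
  next
    case False
    then show ?thesis using that dom unfolding comps dominated_by_def by blast
  qed
  then show ?thesis
    using dom r1.vertex_dual_merge[OF I e] r1.merge_keeps_time_and_duals[OF e]
    unfolding dominated_by_def by simp
qed

text \<open>During a growth phase of the first run, a vertex whose load grows lies in a component with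
  a vertex w that is still alive; w is alive in the second run too, so there the load of that
  vertex grows at least as fast.\<close>

lemma vertex_dual_grow_dominated:
  assumes I: "r1.run_invariant st" and grows: "r1.tight_edge st = None" "r1.some_active st"
    and k0: "r2.state_at (mtime st) k0" and dom: "dominated_by st k0"
    and k': "r2.state_at (mtime (r1.step st)) k'" and u: "u \<in> V"
  shows "r1.vertex_dual (r1.step st) u \<le> r2.dual_at k' (mtime (r1.step st)) u"
proof -
  define x where "x = mtime st"
  define x' where "x' = mtime (r1.step st)"
  have x': "x' = x + r1.grow_time st" using r1.step_grow[OF grows] unfolding x_def x'_def by simp
  have xx: "x \<le> x'" using x' r1.grow_time_pos[OF I grows] by simp
  have step: "r1.vertex_dual (r1.step st) u
      = r1.vertex_dual st u + (if r1.vertex_active st u then r1.grow_time st else 0)"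
    by (rule r1.vertex_dual_grow[OF I grows])
  have before: "r1.vertex_dual st u \<le> r2.dual_at k0 x u" using dom u unfolding dominated_by_def x_def by blast
  show ?thesis
  proof (cases "r1.vertex_active st u")
    case False
    have "r2.dual_at k0 x u \<le> r2.dual_at k' x' u"
      by (rule r2.dual_at_mono[OF k0[folded x_def] k'[folded x'_def] xx])
    then show ?thesis using step before False unfolding x'_def by simp
  next
    case True
    then obtain C w where C: "C \<in> comps st" "u \<in> C" "w \<in> C" "x < s w"
      unfolding r1.vertex_active_def r1.active_comps_def is_active_def x_def by blast
    have "w \<in> V"
      using partition_on_block_subset[OF r1.run_invariantD(1)[OF I] C(1)] C(3) by blast
    then have "x' \<le> s' w"
      using r1.grow_time_le_deadline[of w st] C(4) x' deadlines_le[of w] unfolding x_def by simp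
    obtain D where D: "D \<in> comps (r2.run k0)" "C \<subseteq> D" using dom C(1) unfolding dominated_by_def by blast
    have "r2.dual_at k0 x u + (x' - x) \<le> r2.dual_at k' x' u"
      using r2.dual_at_growth[OF k0[folded x_def] k'[folded x'_def] xx \<open>x' \<le> s' w\<close> D(1)] D(2) C(2,3) u
      by blast
    then show ?thesis using step before True x' unfolding x'_def by simp
  qed
qed

lemma dominated_by_grow:
  assumes I: "r1.run_invariant st" and grows: "r1.tight_edge st = None" "r1.some_active st"
    and k0: "r2.state_at (mtime st) k0" and dom: "dominated_by st k0"
    and k': "r2.state_at (mtime (r1.step st)) k'"
  shows "dominated_by (r1.step st) k'"
proof -
  have later: "mtime st \<le> mtime (r1.step st)" by (rule r1.mtime_step_mono[OF I])
  have "\<exists>D\<in>comps (r2.run k'). C \<subseteq> D" if "C \<in> comps (r1.step st)" for C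
  proof -
    have "C \<in> comps st" using that r1.step_grow[OF grows] by simp
    then obtain D where D: "D \<in> comps (r2.run k0)" "C \<subseteq> D" using dom unfolding dominated_by_def by blast
    then obtain D' where "D' \<in> comps (r2.run k')" "D \<subseteq> D'"
      using r2.comps_refine_state_at[OF k0 k' later] by blast
    then show ?thesis using D(2) by blast
  qed
  then show ?thesis
    using vertex_dual_grow_dominated[OF assms] unfolding dominated_by_def by blast
qed

lemma run_dominated_by:
  "r2.state_at (mtime (r1.run k)) k' \<Longrightarrow> dominated_by (r1.run k) k'"
proof (induction k arbitrary: k')
  case 0
  then show ?case by (rule dominated_by_init)
next
  case (Suc k)
  note I = r1.run_invariant_run[of k]
  show ?case
  proof (cases "r1.tight_edge (r1.run k)")
    case (Some e)
    then have "mtime (r1.run (Suc k)) = mtime (r1.run k)"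
      using r1.merge_keeps_time_and_duals by (simp add: r1.run_Suc)
    then show ?thesis
      using dominated_by_merge[OF I Some] Suc by (simp add: r1.run_Suc)
  next
    case None
    show ?thesis
    proof (cases "r1.some_active (r1.run k)")
      case True
      obtain k0 where k0: "r2.state_at (mtime (r1.run k)) k0" using r2.state_at_exists r1.mtime_nonneg by blast
      show ?thesis
        using dominated_by_grow[OF I None True k0 Suc.IH[OF k0]] Suc.prems by (simp add: r1.run_Suc)
    next
      case False
      then have "r1.run (Suc k) = r1.run k" using r1.step_stop[OF None] by (simp add: r1.run_Suc)
      then show ?thesis using Suc by simp
    qed
  qed
qed

lemma active_component_refined:
  assumes "0 \<le> x" "r2.state_at x k'" "S \<in> comps (r2.run k')" "w \<in> S" "x < s w"
  shows "\<exists>S'. active_comp_at V eo c s x S' \<and> S' \<subseteq> S"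
proof -
  note P2 = r2.run_invariantD(1)[OF r2.run_invariant_run[of k']]
  have "w \<in> V" using partition_on_block_subset[OF P2 assms(3)] assms(4) by blast
  obtain k where k: "r1.state_at x k" using r1.state_at_exists[OF assms(1)] by blast
  obtain C where C: "C \<in> comps (r1.run k)" "w \<in> C"
    using partition_on_block_exists[OF r1.run_invariantD(1)[OF r1.run_invariant_run] \<open>w \<in> V\<close>] by blast
  obtain k0 where k0: "r2.state_at (mtime (r1.run k)) k0" using r2.state_at_exists r1.mtime_nonneg by blast
  obtain D where D: "D \<in> comps (r2.run k0)" "C \<subseteq> D"
    using run_dominated_by[OF k0] C(1) unfolding dominated_by_def by blast
  have "mtime (r1.run k) \<le> x" using k unfolding r1.state_at_def by simp
  then obtain D' where D': "D' \<in> comps (r2.run k')" "D \<subseteq> D'"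
    using r2.comps_refine_state_at[OF k0 assms(2) _ D(1)] by blast
  have "D' = S" using partition_on_block_unique[OF P2 D'(1) assms(3)] C(2) D(2) D'(2) assms(4) by blast
  moreover have "active_comp_at V eo c s x C"
    unfolding r1.active_comp_at_iff is_active_def using k C assms(5) by blast
  ultimately show ?thesis using D(2) D'(2) by blast
qed

end

theorem mainTheorem15:
  fixes V :: "'v set" and E :: "'v set set" and c :: "'v set \<Rightarrow> real"
    and eo :: "'v set list" and t ts :: "'v \<Rightarrow> real" and q :: 'v
    and \<tau> \<tau>0 :: real and S :: "'v set"
  assumes "wf_graph V E c"
    and "set eo = E" and "distinct eo"
    and "boosted_instance V t ts"
    and "q \<in> V" and "ts q \<le> \<tau>"
    and "0 \<le> \<tau>0"
    and "active_comp_at V eo c (with_boost ts q \<tau>) \<tau>0 S"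
    and "q \<notin> S \<or> \<tau> \<le> \<tau>0"
  shows "\<exists>S'. active_comp_at V eo c ts \<tau>0 S' \<and> S' \<subseteq> S"
proof -
  define s' where "s' = with_boost ts q \<tau>"
  interpret moat_growing_pair V eo c ts s'
    using assms(1,2,6) unfolding wf_graph_def s'_def with_boost_def
    by unfold_locales auto
  obtain k' where k': "r2.state_at \<tau>0 k'" "S \<in> comps (r2.run k')" "is_active s' \<tau>0 S"
    using assms(8) unfolding s'_def[symmetric] r2.active_comp_at_iff by blast
  then obtain w where w: "w \<in> S" "\<tau>0 < s' w" unfolding is_active_def by blast
  have "w \<noteq> q" using w assms(9) unfolding s'_def with_boost_def by auto
  then have "\<tau>0 < ts w" using w(2) unfolding s'_def with_boost_def by simp
  then show ?thesis by (rule active_component_refined[OF assms(7) k'(1,2) w(1)])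
qed

end
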